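(* Let $\mathbf{u}_1,\ldots,\mathbf{u}_n\in\mathbb{C}^d$ satisfy $\sum_{i=1}^n\mathbf{u}_i\mathbf{u}_i^*=\frac{n}{d}\cdot\mathbf{I}$. If $n\le 2d-1$, then for any $\varepsilon_1,\ldots,\varepsilon_n\in\{-1,1\}$, $$\Big\|\sum_{i=1}^n\varepsilon_i\mathbf{u}_i\mathbf{u}_i^*\Big\|=\frac{n}{d}.$$
   Context: $\|\cdot\|$ is the spectral norm. *)

theory Defs
  imports "HOL-Analysis.Analysis"
begin

definition outer_conj :: "complex ^ 'd \<Rightarrow> complex ^ 'd ^ 'd" where
  "outer_conj u = (\<chi> i j. u $ i * cnj (u $ j))"

definition spectral_norm :: "complex ^ 'd ^ 'd \<Rightarrow> real" where
  "spectral_norm A = onorm (\<lambda>x. A *v x)"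

end

theory Submission
  imports Defs
begin

(* Split the indices by sign: the signed sum is A - B, where A and B are the frame operators
   sum u_i u_i^* of the positively and the negatively signed vectors. Both are positive
   semidefinite with A + B = (n/d) I, so B = (n/d) I - A commutes with A and
   (n/d) <Ax, Bx> = <BAx, Ax> + <ABx, Bx> >= 0, which gives |(A - B) x| <= (n/d) |x|.
   Since n < 2d, one of the two index sets has fewer than d elements, so A or B has a nonzero
   kernel vector, on which A - B acts as -(n/d) or as n/d. *)

lemma norm_diff_le_if_psd_sum_eq_scaleR:
  fixes A B :: "'a::real_inner \<Rightarrow> 'a"
  assumes A_linear: "linear A" and A_sym: "\<And>x y. A x \<bullet> y = x \<bullet> A y"
    and A_psd: "\<And>x. 0 \<le> A x \<bullet> x" and B_psd: "\<And>x. 0 \<le> B x \<bullet> x"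
    and A_plus_B: "\<And>x. A x + B x = c *\<^sub>R x" and c: "0 < c"
  shows "norm (A x - B x) \<le> c * norm x"
proof -
  have B_eq: "B w = c *\<^sub>R w - A w" for w
    using A_plus_B[of w] by (simp add: algebra_simps)
  define y where "y = A x"
  define z where "z = B x"
  have yz: "y + z = c *\<^sub>R x"
    by (simp add: y_def z_def A_plus_B)
  have commute: "B y = A z"
    by (simp add: B_eq y_def z_def real_vector.linear_diff[OF A_linear] linear_cmul[OF A_linear])
  have "B y \<bullet> y + A z \<bullet> z = A z \<bullet> (y + z)"
    by (simp add: commute inner_add_right)
  also have "\<dots> = c * (A z \<bullet> x)"
    by (simp only: yz inner_scaleR_right)
  also have "\<dots> = c * (z \<bullet> y)"
    by (simp add: A_sym[of z x] y_def)
  finally have "0 \<le> c * (y \<bullet> z)"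
    using A_psd[of z] B_psd[of y] by (simp add: inner_commute)
  then have yz_nonneg: "0 \<le> y \<bullet> z"
    using c by (simp add: zero_le_mult_iff)
  have "(norm (y - z))\<^sup>2 = (norm (y + z))\<^sup>2 - 4 * (y \<bullet> z)"
    by (simp add: power2_norm_eq_inner inner_diff inner_add inner_commute[of z y])
  also have "\<dots> \<le> (c * norm x)\<^sup>2"
    unfolding yz using yz_nonneg c by (simp add: power_mult_distrib)
  finally have "(norm (A x - B x))\<^sup>2 \<le> (c * norm x)\<^sup>2"
    unfolding y_def z_def .
  then show ?thesis
    by (rule power2_le_imp_le) (simp add: c less_imp_le)
qed

lemma scaleR_vec_eq_of_real_scale: "r *\<^sub>R x = of_real r *s (x :: 'a::real_algebra_1 ^ 'n)"
  unfolding vec_eq_iff vector_scaleR_component vector_smult_component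
  by (simp add: scaleR_conv_of_real)

definition cinner :: "complex ^ 'd \<Rightarrow> complex ^ 'd \<Rightarrow> complex" where
  "cinner x y = (\<Sum>j\<in>UNIV. x $ j * cnj (y $ j))"

lemma cinner_add_left: "cinner (x + y) z = cinner x z + cinner y z"
  by (simp add: cinner_def algebra_simps sum.distrib)

lemma cinner_scale_left: "cinner (a *s x) y = a * cinner x y"
  by (simp add: cinner_def sum_distrib_left mult.assoc)

lemma cinner_scale_right: "cinner x (a *s y) = cnj a * cinner x y"
  by (simp add: cinner_def sum_distrib_left algebra_simps)

lemma cinner_sum_left: "cinner (sum f F) y = (\<Sum>i\<in>F. cinner (f i) y)"
  by (simp add: cinner_def sum_distrib_right sum.swap[of _ F])

lemma cinner_sum_right: "cinner x (sum f F) = (\<Sum>i\<in>F. cinner x (f i))"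
  by (simp add: cinner_def sum_distrib_left sum.swap[of _ F])

lemma cinner_commute: "cinner y x = cnj (cinner x y)"
  by (simp add: cinner_def mult.commute)

lemma inner_eq_Re_cinner: "x \<bullet> y = Re (cinner x y)"
  by (simp add: inner_vec_def cinner_def inner_complex_def Re_sum)

lemma inner_ii_scale_eq_Im_cinner: "x \<bullet> (\<i> *s y) = Im (cinner x y)"
  by (simp add: inner_vec_def cinner_def inner_complex_def Im_sum)

lemma cinner_eq_0_iff_orthogonal: "cinner x y = 0 \<longleftrightarrow> x \<bullet> y = 0 \<and> x \<bullet> (\<i> *s y) = 0"
  using inner_eq_Re_cinner[of x y] inner_ii_scale_eq_Im_cinner[of x y] by (simp add: complex_eq_iff)

definition frame_op :: "(nat \<Rightarrow> complex ^ 'd) \<Rightarrow> nat set \<Rightarrow> complex ^ 'd \<Rightarrow> complex ^ 'd" where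
  "frame_op u F x = (\<Sum>i\<in>F. cinner x (u i) *s u i)"

lemma linear_frame_op: "linear (frame_op u F)"
proof (rule linearI)
  show "frame_op u F (x + y) = frame_op u F x + frame_op u F y" for x y
    by (simp add: frame_op_def cinner_add_left vec_eq_iff algebra_simps sum.distrib)
  show "frame_op u F (r *\<^sub>R x) = r *\<^sub>R frame_op u F x" for r x
    by (simp add: frame_op_def scaleR_vec_eq_of_real_scale cinner_scale_left vec_eq_iff
        sum_distrib_left mult.assoc)
qed

lemma cinner_frame_op_left: "cinner (frame_op u F x) y = (\<Sum>i\<in>F. cinner x (u i) * cinner (u i) y)"
  by (simp add: frame_op_def cinner_sum_left cinner_scale_left)

lemma cinner_frame_op_right: "cinner x (frame_op u F y) = (\<Sum>i\<in>F. cinner x (u i) * cinner (u i) y)"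
  by (simp add: frame_op_def cinner_sum_right cinner_scale_right cinner_commute[of y] mult.commute)

lemma frame_op_symmetric: "frame_op u F x \<bullet> y = x \<bullet> frame_op u F y"
proof -
  have "cinner x (frame_op u F y) = cinner (frame_op u F x) y"
    by (simp add: cinner_frame_op_left cinner_frame_op_right)
  then show ?thesis
    by (simp add: inner_eq_Re_cinner)
qed

lemma frame_op_psd: "0 \<le> frame_op u F x \<bullet> x"
proof -
  have "cinner (frame_op u F x) x = (\<Sum>i\<in>F. cinner x (u i) * cnj (cinner x (u i)))"
    by (simp add: cinner_frame_op_left cinner_commute[of "u _"])
  then show ?thesis
    by (simp add: inner_eq_Re_cinner Re_sum sum_nonneg)
qed

lemma frame_op_nontrivial_kernel:
  fixes u :: "nat \<Rightarrow> complex ^ 'd"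
  assumes "finite F" and "card F < CARD('d)"
  obtains x where "x \<noteq> 0" and "frame_op u F x = 0"
proof -
  define S where "S = u ` F \<union> (\<lambda>i. \<i> *s u i) ` F"
  have "dim S \<le> card S"
    using assms(1) by (simp add: S_def dim_le_card')
  also have "\<dots> \<le> card F + card F"
    unfolding S_def by (intro card_Un_le[THEN order_trans] add_mono card_image_le assms(1))
  also have "\<dots> < DIM(complex ^ 'd)"
    using assms(2) by simp
  finally obtain x :: "complex ^ 'd" where "x \<noteq> 0" and x: "\<And>y. y \<in> span S \<Longrightarrow> orthogonal x y"
    using orthogonal_to_subspace_exists by blast
  have "cinner x (u i) = 0" if "i \<in> F" for i
    using that x[of "u i"] x[of "\<i> *s u i"]
    by (simp add: cinner_eq_0_iff_orthogonal orthogonal_def S_def span_base)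
  then have "frame_op u F x = 0"
    by (simp add: frame_op_def)
  with \<open>x \<noteq> 0\<close> show thesis ..
qed

lemma sum_outer_conj_mult_vec: "(\<Sum>i\<in>F. outer_conj (u i)) *v x = frame_op u F x"
  by (simp add: vec_eq_iff matrix_vector_mult_def outer_conj_def frame_op_def cinner_def
      sum_distrib_left sum_distrib_right sum.swap[of _ F] algebra_simps)

lemma mat_mult_vec: "mat a *v x = a *s x"
proof -
  have "(if i = j then a else 0) * x $ j = (if i = j then a * x $ j else 0)" for i j
    by simp
  then show ?thesis
    by (simp add: vec_eq_iff matrix_vector_mult_def mat_def)
qed

lemma spectral_norm_eqI:
  assumes "\<And>y. norm (A *v y) \<le> c * norm y" and "x \<noteq> 0" and "norm (A *v x) = c * norm x"
  shows "spectral_norm A = c"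
proof (rule antisym)
  show "spectral_norm A \<le> c"
    unfolding spectral_norm_def by (rule onorm_le) (rule assms(1))
  have "c * norm x \<le> spectral_norm A * norm x"
    using onorm[OF matrix_vector_mul_bounded_linear, of A x] assms(3)
    by (simp add: spectral_norm_def)
  then show "c \<le> spectral_norm A"
    using assms(2) by simp
qed

lemma sum_signs_eq_diff:
  fixes f :: "'i \<Rightarrow> 'a::real_vector"
  assumes "finite F" and "\<And>i. i \<in> F \<Longrightarrow> \<epsilon> i \<in> {-1, 1}"
  shows "(\<Sum>i\<in>F. \<epsilon> i *\<^sub>R f i) = (\<Sum>i\<in>{i\<in>F. \<epsilon> i = 1}. f i) - (\<Sum>i\<in>{i\<in>F. \<epsilon> i = -1}. f i)"
proof -
  define P where "P = {i\<in>F. \<epsilon> i = 1}"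
  define M where "M = {i\<in>F. \<epsilon> i = -1}"
  have "F = P \<union> M" "P \<inter> M = {}" "finite P" "finite M"
    using assms by (auto simp: P_def M_def)
  then have "(\<Sum>i\<in>F. \<epsilon> i *\<^sub>R f i) = (\<Sum>i\<in>P. \<epsilon> i *\<^sub>R f i) + (\<Sum>i\<in>M. \<epsilon> i *\<^sub>R f i)"
    by (simp add: sum.union_disjoint)
  also have "\<dots> = (\<Sum>i\<in>P. f i) - (\<Sum>i\<in>M. f i)"
    by (simp add: P_def M_def sum_negf[symmetric])
  finally show ?thesis
    unfolding P_def M_def .
qed

lemma norm_frame_op_diff_attained:
  fixes u :: "nat \<Rightarrow> complex ^ 'd"
  assumes "finite P" and "finite M" and "card P + card M < 2 * CARD('d)"
    and frame: "\<And>x. frame_op u P x + frame_op u M x = c *\<^sub>R x" and "0 \<le> c"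
  obtains x where "x \<noteq> 0" and "norm (frame_op u P x - frame_op u M x) = c * norm x"
proof -
  consider "card P < CARD('d)" | "card M < CARD('d)"
    using assms(3) by linarith
  then obtain x where "x \<noteq> 0" and "frame_op u P x = 0 \<or> frame_op u M x = 0"
    by cases (metis frame_op_nontrivial_kernel assms(1,2))+
  moreover have "frame_op u P x - frame_op u M x = c *\<^sub>R x \<or> frame_op u P x - frame_op u M x = - (c *\<^sub>R x)"
    using frame[of x] calculation(2) by (auto simp: algebra_simps)
  ultimately show thesis
    using that \<open>0 \<le> c\<close> by auto
qed

theorem lemma5p2:
  fixes u :: "nat \<Rightarrow> complex ^ 'd" and n :: nat and \<epsilon> :: "nat \<Rightarrow> real"
  assumes frame: "(\<Sum>i<n. outer_conj (u i)) = mat (complex_of_real (real n / real CARD('d)))"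
    and small: "n \<le> 2 * CARD('d) - 1"
    and signs: "\<And>i. i < n \<Longrightarrow> \<epsilon> i \<in> {-1, 1}"
  shows "spectral_norm (\<Sum>i<n. \<epsilon> i *\<^sub>R outer_conj (u i)) = real n / real CARD('d)"
proof (cases "n = 0")
  case True
  then show ?thesis
    by (simp add: spectral_norm_def onorm_zero)
next
  case False
  define c where "c = real n / real CARD('d)"
  define P where "P = {i\<in>{..<n}. \<epsilon> i = 1}"
  define M where "M = {i\<in>{..<n}. \<epsilon> i = -1}"
  have parts: "{..<n} = P \<union> M" "P \<inter> M = {}" "finite P" "finite M"
    using signs by (auto simp: P_def M_def)
  have frame_ops: "frame_op u P x + frame_op u M x = c *\<^sub>R x" for x
    using arg_cong[OF frame, of "\<lambda>A. A *v x"]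
    by (simp add: parts sum.union_disjoint matrix_vector_mult_add_rdistrib sum_outer_conj_mult_vec
        mat_mult_vec scaleR_vec_eq_of_real_scale c_def)
  have "(\<Sum>i<n. \<epsilon> i *\<^sub>R outer_conj (u i)) = (\<Sum>i\<in>P. outer_conj (u i)) - (\<Sum>i\<in>M. outer_conj (u i))"
    unfolding P_def M_def using signs by (intro sum_signs_eq_diff) auto
  then have signed: "(\<Sum>i<n. \<epsilon> i *\<^sub>R outer_conj (u i)) *v x = frame_op u P x - frame_op u M x" for x
    by (simp add: matrix_vector_mult_diff_rdistrib sum_outer_conj_mult_vec)
  have "card P + card M = n"
    using card_Un_disjoint[OF parts(3,4,2)] by (simp flip: parts(1))
  then have "card P + card M < 2 * CARD('d)"
    using small zero_less_card_finite[where 'a='d] by linarith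
  then obtain x where "x \<noteq> 0" and "norm (frame_op u P x - frame_op u M x) = c * norm x"
    using norm_frame_op_diff_attained[OF parts(3,4) _ frame_ops] by (auto simp: c_def)
  moreover have "norm (frame_op u P y - frame_op u M y) \<le> c * norm y" for y
    using False by (intro norm_diff_le_if_psd_sum_eq_scaleR[OF linear_frame_op frame_op_symmetric
        frame_op_psd frame_op_psd frame_ops]) (simp add: c_def)
  ultimately show ?thesis
    unfolding c_def[symmetric] signed[symmetric] by (rule spectral_norm_eqI[rotated])
qed

end
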